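(* Let $\gamma>\gamma^\star$ and define $\mathcal{K}_\gamma^+=\Phi(\mathcal{G}_\gamma^+)$ and $\mathcal{K}_\gamma^-=\Phi(\mathcal{G}_\gamma^-)$. If $\mathcal{K}_\gamma$ has two path-connected components $\mathcal{K}_\gamma^+$ and $\mathcal{K}_\gamma^-$, then for any $T\in\mathbb{R}^{n_x\times n_x}$ invertible with $\det T<0$, the mapping $\mathscr{T}_T$ restricts to a diffeomorphism from $\mathcal{K}_\gamma^+$ onto $\mathcal{K}_\gamma^-$.
   Context: Consider the continuous-time linear plant $\dot x=Ax+B_1w+B_2u$, $z=C_1x+D_{11}w+D_{12}u$, $y=C_2x+D_{21}w$, with $x\in\mathbb{R}^{n_x}$, $w\in\mathbb{R}^{n_w}$, $u\in\mathbb{R}^{n_u}$, $y\in\mathbb{R}^{n_y}$, $z\in\mathbb{R}^{n_z}$ and real matrices of compatible dimensions; assume $(A,B_2)$ stabilizable and $(C_2,A)$ detectable. A full-order controller $\dot\xi=A_K\xi+B_Ky$, $u=C_K\xi+D_Ky$, $\xi\in\mathbb{R}^{n_x}$, is identified with $K=\begin{bmatrix}D_K & C_K\\ B_K & A_K\end{bmatrix}$. Closed-loop matrices: $A_{cl}=\begin{bmatrix}A+B_2D_KC_2 & B_2C_K\\ B_KC_2 & A_K\end{bmatrix}$, $B_{cl}=\begin{bmatrix}B_1+B_2D_KD_{21}\\ B_KD_{21}\end{bmatrix}$, $C_{cl}=\begin{bmatrix}C_1+D_{12}D_KC_2 & D_{12}C_K\end{bmatrix}$, $D_{cl}=D_{11}+D_{12}D_KD_{21}$;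 $\mathcal{C}_{stab}$ is the set of $K$ with $A_{cl}$ Hurwitz; $\mathbf{T}_{zw}(s)=C_{cl}(sI-A_{cl})^{-1}B_{cl}+D_{cl}$; $\mathcal{K}_\gamma=\{K\in\mathcal{C}_{stab}:\|\mathbf{T}_{zw}\|_\infty<\gamma\}$; $\gamma^\star=\inf_{K\in\mathcal{C}_{stab}}\|\mathbf{T}_{zw}\|_\infty$. For invertible $T$, $\mathscr{T}_T(K)=\begin{bmatrix}D_K & C_KT^{-1}\\ TB_K & TA_KT^{-1}\end{bmatrix}$ (similarity transformation). For $X,Y\in\mathbb{S}^{n_x}$, $\hat A\in\mathbb{R}^{n_x\times n_x}$, $\hat B\in\mathbb{R}^{n_x\times n_y}$, $\hat C\in\mathbb{R}^{n_u\times n_x}$, $\hat D\in\mathbb{R}^{n_u\times n_y}$, let $M_\gamma$ be the symmetric $4\times4$ block matrix with $M_{11}=AX+XA^T+B_2\hat C+(B_2\hat C)^T$, $M_{12}=\hat A^T+A+B_2\hat DC_2$, $M_{13}=B_1+B_2\hat DD_{21}$, $M_{14}=(C_1X+D_{12}\hat C)^T$, $M_{22}=A^TY+YA+\hat BC_2+(\hat BC_2)^T$, $M_{23}=YB_1+\hat BD_{21}$, $M_{24}=(C_1+D_{12}\hat DC_2)^T$, $M_{33}=-\gamma I$, $M_{34}=(D_{11}+D_{12}\hat DD_{21})^T$, $M_{44}=-\gamma I$. $\mathcal{G}_\gamma$ is the set of $(X,Y,\hat A,\hat B,\hat C,\hat D,\Pi,\Xi)$ with $\begin{bmatrix}X&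 I\\ I& Y\end{bmatrix}\succ0$, $M_\gamma\prec0$, $\Pi,\Xi\in\mathbb{R}^{n_x\times n_x}$ and $\Xi\Pi=I-YX$; $\mathcal{G}_\gamma^{\pm}$ are the subsets with $\det\Pi>0$, resp. $\det\Pi<0$. $\Phi(X,Y,\hat A,\hat B,\hat C,\hat D,\Pi,\Xi)=\begin{bmatrix} I & 0\\ YB_2 & \Xi\end{bmatrix}^{-1}\begin{bmatrix}\hat D & \hat C\\ \hat B & \hat A-YAX\end{bmatrix}\begin{bmatrix} I & C_2X\\ 0 & \Pi\end{bmatrix}^{-1}$ (well defined on $\mathcal{G}_\gamma$, with $\Phi(\mathcal{G}_\gamma)=\mathcal{K}_\gamma$). *)

theory Defs
  imports "HOL-Analysis.Analysis"
begin

definition blockm ::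
  "'a^'n1::finite^'m1::finite \<Rightarrow> 'a^'n2::finite^'m1 \<Rightarrow> 'a^'n1^'m2::finite \<Rightarrow> 'a^'n2^'m2 \<Rightarrow> 'a^('n1+'n2)^('m1+'m2)" where
  "blockm P Q R S = (\<chi> i j. case i of
      Inl i1 \<Rightarrow> (case j of Inl j1 \<Rightarrow> P$i1$j1 | Inr j2 \<Rightarrow> Q$i1$j2)
    | Inr i2 \<Rightarrow> (case j of Inl j1 \<Rightarrow> R$i2$j1 | Inr j2 \<Rightarrow> S$i2$j2))"

definition blk11 :: "'a^('n1::finite+'n2::finite)^('m1::finite+'m2::finite) \<Rightarrow> 'a^'n1^'m1" where
  "blk11 K = (\<chi> i j. K $ Inl i $ Inl j)"
definition blk12 :: "'a^('n1::finite+'n2::finite)^('m1::finite+'m2::finite) \<Rightarrow> 'a^'n2^'m1" where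
  "blk12 K = (\<chi> i j. K $ Inl i $ Inr j)"
definition blk21 :: "'a^('n1::finite+'n2::finite)^('m1::finite+'m2::finite) \<Rightarrow> 'a^'n1^'m2" where
  "blk21 K = (\<chi> i j. K $ Inr i $ Inl j)"
definition blk22 :: "'a^('n1::finite+'n2::finite)^('m1::finite+'m2::finite) \<Rightarrow> 'a^'n2^'m2" where
  "blk22 K = (\<chi> i j. K $ Inr i $ Inr j)"

definition pos_def :: "real^'n::finite^'n \<Rightarrow> bool" where
  "pos_def M \<longleftrightarrow> transpose M = M \<and> (\<forall>v. v \<noteq> 0 \<longrightarrow> v \<bullet> (M *v v) > 0)"

definition neg_def :: "real^'n::finite^'n \<Rightarrow> bool" where
  "neg_def M \<longleftrightarrow> transpose M = M \<and> (\<forall>v. v \<noteq> 0 \<longrightarrow> v \<bullet> (M *v v) < 0)"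

definition cplx :: "real^'n::finite^'m::finite \<Rightarrow> complex^'n^'m" where
  "cplx M = (\<chi> i j. complex_of_real (M$i$j))"

definition hurwitz :: "real^'n::finite^'n \<Rightarrow> bool" where
  "hurwitz A \<longleftrightarrow> (\<forall>s::complex. det (mat s - cplx A) = 0 \<longrightarrow> Re s < 0)"

record ('x,'w,'u,'y,'z) plant =
  pA   :: "real^'x^'x"
  pB1  :: "real^'w^'x"
  pB2  :: "real^'u^'x"
  pC1  :: "real^'x^'z"
  pD11 :: "real^'w^'z"
  pD12 :: "real^'u^'z"
  pC2  :: "real^'x^'y"
  pD21 :: "real^'w^'y"

definition stabilizable :: "real^'x::finite^'x \<Rightarrow> real^'u::finite^'x \<Rightarrow> bool" where
  "stabilizable A B \<longleftrightarrow> (\<exists>F::real^'x^'u. hurwitz (A + B ** F))"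

definition detectable :: "real^'x::finite^'y::finite \<Rightarrow> real^'x^'x \<Rightarrow> bool" where
  "detectable C A \<longleftrightarrow> (\<exists>L::real^'y^'x. hurwitz (A + L ** C))"

text \<open>A controller \<open>K = [D_K, C_K; B_K, A_K]\<close> is a real matrix of size
  \<open>(n_u+n_x) \<times> (n_y+n_x)\<close>: \<open>D_K = blk11 K\<close>, \<open>C_K = blk12 K\<close>,
  \<open>B_K = blk21 K\<close>, \<open>A_K = blk22 K\<close>.\<close>

type_synonym ('x,'u,'y) ctrl = "real^('y+'x)^('u+'x)"

definition Acl :: "('x::finite,'w::finite,'u::finite,'y::finite,'z::finite) plant \<Rightarrow> ('x,'u,'y) ctrl \<Rightarrow> real^('x+'x)^('x+'x)" where
  "Acl P K = blockm (pA P + pB2 P ** blk11 K ** pC2 P) (pB2 P ** blk12 K)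
                    (blk21 K ** pC2 P) (blk22 K)"

definition Bcl :: "('x::finite,'w::finite,'u::finite,'y::finite,'z::finite) plant \<Rightarrow> ('x,'u,'y) ctrl \<Rightarrow> real^'w^('x+'x)" where
  "Bcl P K = (\<chi> i. case i of Inl i1 \<Rightarrow> (pB1 P + pB2 P ** blk11 K ** pD21 P) $ i1
                         | Inr i2 \<Rightarrow> (blk21 K ** pD21 P) $ i2)"

definition Ccl :: "('x::finite,'w::finite,'u::finite,'y::finite,'z::finite) plant \<Rightarrow> ('x,'u,'y) ctrl \<Rightarrow> real^('x+'x)^'z" where
  "Ccl P K = (\<chi> i j. case j of Inl j1 \<Rightarrow> (pC1 P + pD12 P ** blk11 K ** pC2 P) $ i $ j1
                           | Inr j2 \<Rightarrow> (pD12 P ** blk12 K) $ i $ j2)"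

definition Dcl :: "('x::finite,'w::finite,'u::finite,'y::finite,'z::finite) plant \<Rightarrow> ('x,'u,'y) ctrl \<Rightarrow> real^'w^'z" where
  "Dcl P K = pD11 P + pD12 P ** blk11 K ** pD21 P"

definition Cstab :: "('x::finite,'w::finite,'u::finite,'y::finite,'z::finite) plant \<Rightarrow> ('x,'u,'y) ctrl set" where
  "Cstab P = {K. hurwitz (Acl P K)}"

definition Tzw :: "('x::finite,'w::finite,'u::finite,'y::finite,'z::finite) plant \<Rightarrow> ('x,'u,'y) ctrl \<Rightarrow> complex \<Rightarrow> complex^'w^'z" where
  "Tzw P K s = cplx (Ccl P K) ** matrix_inv (mat s - cplx (Acl P K)) ** cplx (Bcl P K)
               + cplx (Dcl P K)"

text \<open>H-infinity norm: supremum over the imaginary axis of the largest singular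
  value (= induced Euclidean operator norm).\<close>
definition hinf_norm :: "('x::finite,'w::finite,'u::finite,'y::finite,'z::finite) plant \<Rightarrow> ('x,'u,'y) ctrl \<Rightarrow> real" where
  "hinf_norm P K = Sup (range (\<lambda>\<omega>::real. onorm (\<lambda>v. Tzw P K (\<i> * complex_of_real \<omega>) *v v)))"

definition Kgamma :: "('x::finite,'w::finite,'u::finite,'y::finite,'z::finite) plant \<Rightarrow> real \<Rightarrow> ('x,'u,'y) ctrl set" where
  "Kgamma P \<gamma> = {K \<in> Cstab P. hinf_norm P K < \<gamma>}"

definition gamma_opt :: "('x::finite,'w::finite,'u::finite,'y::finite,'z::finite) plant \<Rightarrow> real" where
  "gamma_opt P = Inf (hinf_norm P ` Cstab P)"

definition simtrans :: "real^'x::finite^'x \<Rightarrow> ('x,'u::finite,'y::finite) ctrl \<Rightarrow> ('x,'u,'y) ctrl" where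
  "simtrans T K = blockm (blk11 K) (blk12 K ** matrix_inv T)
                         (T ** blk21 K) (T ** blk22 K ** matrix_inv T)"

text \<open>Tuple \<open>(X, Y, Ahat, Bhat, Chat, Dhat, Pm, Xi)\<close>.\<close>
type_synonym ('x,'u,'y) lmivar =
  "(real^'x^'x) \<times> (real^'x^'x) \<times> (real^'x^'x) \<times> (real^'y^'x) \<times> (real^'x^'u) \<times> (real^'y^'u)
   \<times> (real^'x^'x) \<times> (real^'x^'x)"

definition Mgamma :: "('x::finite,'w::finite,'u::finite,'y::finite,'z::finite) plant \<Rightarrow> real
    \<Rightarrow> real^'x^'x \<Rightarrow> real^'x^'x \<Rightarrow> real^'x^'x \<Rightarrow> real^'y^'x \<Rightarrow> real^'x^'u \<Rightarrow> real^'y^'u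
    \<Rightarrow> real^(('x+'x)+('w+'z))^(('x+'x)+('w+'z))" where
  "Mgamma P \<gamma> X Y Ah Bh Ch Dh =
    (let A = pA P; B1 = pB1 P; B2 = pB2 P; C1 = pC1 P; D11 = pD11 P; D12 = pD12 P;
         C2 = pC2 P; D21 = pD21 P;
         M11 = A ** X + X ** transpose A + B2 ** Ch + transpose (B2 ** Ch);
         M12 = transpose Ah + A + B2 ** Dh ** C2;
         M13 = B1 + B2 ** Dh ** D21;
         M14 = transpose (C1 ** X + D12 ** Ch);
         M22 = transpose A ** Y + Y ** A + Bh ** C2 + transpose (Bh ** C2);
         M23 = Y ** B1 + Bh ** D21;
         M24 = transpose (C1 + D12 ** Dh ** C2);
         M33 = mat (-\<gamma>);
         M34 = transpose (D11 + D12 ** Dh ** D21);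
         M44 = mat (-\<gamma>);
         Up = blockm M13 M14 M23 M24
     in blockm (blockm M11 M12 (transpose M12) M22) Up
               (transpose Up) (blockm M33 M34 (transpose M34) M44))"

definition Ggamma :: "('x::finite,'w::finite,'u::finite,'y::finite,'z::finite) plant \<Rightarrow> real \<Rightarrow> ('x,'u,'y) lmivar set" where
  "Ggamma P \<gamma> = {(X, Y, Ah, Bh, Ch, Dh, Pm, Xi).
      transpose X = X \<and> transpose Y = Y \<and>
      pos_def (blockm X (mat 1) (mat 1) Y) \<and>
      neg_def (Mgamma P \<gamma> X Y Ah Bh Ch Dh) \<and>
      Xi ** Pm = mat 1 - Y ** X}"

definition Ggamma_plus :: "('x::finite,'w::finite,'u::finite,'y::finite,'z::finite) plant \<Rightarrow> real \<Rightarrow> ('x,'u,'y) lmivar set" where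
  "Ggamma_plus P \<gamma> = {g \<in> Ggamma P \<gamma>. det (fst (snd (snd (snd (snd (snd (snd g))))))) > 0}"

definition Ggamma_minus :: "('x::finite,'w::finite,'u::finite,'y::finite,'z::finite) plant \<Rightarrow> real \<Rightarrow> ('x,'u,'y) lmivar set" where
  "Ggamma_minus P \<gamma> = {g \<in> Ggamma P \<gamma>. det (fst (snd (snd (snd (snd (snd (snd g))))))) < 0}"

definition Phi :: "('x::finite,'w::finite,'u::finite,'y::finite,'z::finite) plant \<Rightarrow> ('x,'u,'y) lmivar \<Rightarrow> ('x,'u,'y) ctrl" where
  "Phi P g = (case g of (X, Y, Ah, Bh, Ch, Dh, Pm, Xi) \<Rightarrow>
     matrix_inv (blockm (mat 1 :: real^'u^'u) (0 :: real^'x^'u) (Y ** pB2 P) Xi)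
     ** blockm Dh Ch Bh (Ah - Y ** pA P ** X)
     ** matrix_inv (blockm (mat 1 :: real^'y^'y) (pC2 P ** X) (0 :: real^'y^'x) Pm))"

fun higher_differentiable_on ::
  "'a::real_normed_vector set \<Rightarrow> ('a \<Rightarrow> 'b::real_normed_vector) \<Rightarrow> nat \<Rightarrow> bool" where
  "higher_differentiable_on S f 0 \<longleftrightarrow> continuous_on S f"
| "higher_differentiable_on S f (Suc n) \<longleftrightarrow>
     (\<forall>x\<in>S. f differentiable (at x)) \<and>
     (\<forall>v. higher_differentiable_on S (\<lambda>x. frechet_derivative f (at x) v) n)"

definition smooth_on :: "'a::real_normed_vector set \<Rightarrow> ('a \<Rightarrow> 'b::real_normed_vector) \<Rightarrow> bool" where
  "smooth_on S f \<longleftrightarrow> (\<forall>n. higher_differentiable_on S f n)"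

definition diffeomorphism ::
  "'a::real_normed_vector set \<Rightarrow> 'b::real_normed_vector set \<Rightarrow> ('a \<Rightarrow> 'b) \<Rightarrow> bool" where
  "diffeomorphism S T f \<longleftrightarrow>
     (\<exists>g. homeomorphism S T f g \<and> smooth_on S f \<and> smooth_on T g)"

end

theory Submission
  imports Defs
begin

(* The similarity T acts on the LMI data by (Pi, Xi) |-> (T Pi, Xi T^-1). This keeps the
   product Xi Pi and all other variables, hence preserves G_gamma, multiplies det Pi by det T,
   and turns Phi into simtrans T o Phi. So for det T < 0, simtrans T maps K_gamma^+ into
   K_gamma^-, and simtrans (T^-1) maps K_gamma^- back into K_gamma^+. Both maps are linear and
   mutually inverse, hence form a diffeomorphism. *)

lemma matrix_add_rdistrib: "(A + B) ** C = A ** C + B ** (C :: 'a::semiring_1^'p^'n)"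
  by (vector matrix_matrix_mult_def sum.distrib[symmetric] field_simps)

lemma matrix_mul_minus_right: "A ** (- B) = - (A ** (B :: 'a::ring_1^'p^'n))"
  by (vector matrix_matrix_mult_def sum_negf)

lemma matrix_inv_unique:
  fixes A B :: "'a::field^'n^'n"
  assumes "A ** B = mat 1"
  shows "matrix_inv A = B"
  unfolding matrix_inv_def
proof (rule some_equality)
  show "A ** B = mat 1 \<and> B ** A = mat 1"
    using assms matrix_left_right_inverse by blast
  show "A' = B" if "A ** A' = mat 1 \<and> A' ** A = mat 1" for A'
    by (metis that assms matrix_mul_assoc matrix_mul_lid matrix_mul_rid)
qed

lemma matrix_inv_right:
  fixes A :: "'a::field^'n^'n"
  assumes "invertible A"
  shows "A ** matrix_inv A = mat 1"
  using assms matrix_inv_unique invertible_right_inverse by metis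

lemma matrix_inv_left:
  fixes A :: "'a::field^'n^'n"
  assumes "invertible A"
  shows "matrix_inv A ** A = mat 1"
  using matrix_inv_right[OF assms] matrix_left_right_inverse by blast

lemma invertible_matrix_inv:
  fixes A :: "'a::field^'n^'n"
  shows "invertible A \<Longrightarrow> invertible (matrix_inv A)"
  using matrix_inv_left invertible_right_inverse by blast

lemma matrix_inv_matrix_inv:
  fixes A :: "'a::field^'n^'n"
  shows "invertible A \<Longrightarrow> matrix_inv (matrix_inv A) = A"
  by (simp add: matrix_inv_left matrix_inv_unique)

lemma matrix_inv_mult:
  fixes A B :: "'a::field^'n^'n"
  assumes "invertible A" "invertible B"
  shows "matrix_inv (A ** B) = matrix_inv B ** matrix_inv A"
proof (rule matrix_inv_unique)
  have "A ** B ** (matrix_inv B ** matrix_inv A) = A ** (B ** matrix_inv B) ** matrix_inv A"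
    by (simp add: matrix_mul_assoc)
  then show "A ** B ** (matrix_inv B ** matrix_inv A) = mat 1"
    by (simp add: assms matrix_inv_right)
qed

lemma det_matrix_inv:
  fixes A :: "'a::field^'n^'n"
  assumes "invertible A"
  shows "det (matrix_inv A) = inverse (det A)"
  using det_mul[of A "matrix_inv A"] assms
  by (simp add: matrix_inv_right invertible_det_nz field_simps)

lemma blockm_mult:
  fixes A :: "'a::semiring_1^'n1::finite^'m1::finite" and B :: "'a^'n2::finite^'m1"
    and C :: "'a^'n1^'m2::finite" and D :: "'a^'n2^'m2"
    and E :: "'a^'k1::finite^'n1" and F :: "'a^'k2::finite^'n1"
    and G :: "'a^'k1^'n2" and H :: "'a^'k2^'n2"
  shows "blockm A B C D ** blockm E F G H =
     blockm (A ** E + B ** G) (A ** F + B ** H) (C ** E + D ** G) (C ** F + D ** H)"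
  unfolding blockm_def matrix_matrix_mult_def
  by (auto simp: vec_eq_iff sum.Plus[where A=UNIV and B=UNIV, simplified] o_def sum.distrib
      split: sum.split)

lemma blockm_mat_1 [simp]:
  "blockm (mat 1) 0 0 (mat 1) = (mat 1 :: 'a::zero_neq_one^('m::finite+'n::finite)^('m+'n))"
  unfolding blockm_def by (auto simp: vec_eq_iff mat_def split: sum.split)

lemma blockm_blk: "blockm (blk11 K) (blk12 K) (blk21 K) (blk22 K) = K"
  unfolding blockm_def blk11_def blk12_def blk21_def blk22_def
  by (auto simp: vec_eq_iff split: sum.split)

lemma invertible_blockm_lower:
  fixes C :: "'a::field^'m::finite^'n::finite" and D :: "'a^'n^'n"
  assumes "invertible D"
  shows "invertible (blockm (mat 1) 0 C D)"
  unfolding invertible_right_inverse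
proof
  have "D ** (matrix_inv D ** C) = C"
    by (simp add: matrix_mul_assoc assms matrix_inv_right)
  then show "blockm (mat 1) 0 C D ** blockm (mat 1) 0 (- (matrix_inv D ** C)) (matrix_inv D) = mat 1"
    by (simp add: blockm_mult matrix_mul_minus_right assms matrix_inv_right)
qed

lemma invertible_blockm_upper:
  fixes B :: "'a::field^'n::finite^'m::finite" and D :: "'a^'n^'n"
  assumes "invertible D"
  shows "invertible (blockm (mat 1) B 0 D)"
  unfolding invertible_right_inverse
proof
  show "blockm (mat 1) B 0 D ** blockm (mat 1) (- (B ** matrix_inv D)) 0 (matrix_inv D) = mat 1"
    by (simp add: blockm_mult assms matrix_inv_right matrix_mul_assoc)
qed

lemma matrix_inv_blockm_diag:
  fixes D :: "'a::field^'n::finite^'n"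
  assumes "invertible D"
  shows "matrix_inv (blockm (mat 1 :: 'a^'m::finite^'m) 0 0 D) = blockm (mat 1) 0 0 (matrix_inv D)"
  by (rule matrix_inv_unique) (simp add: blockm_mult assms matrix_inv_right)

lemma bounded_linear_matrix_sandwich:
  fixes A :: "real^'m::finite^'p::finite" and B :: "real^'q::finite^'n::finite"
  shows "bounded_linear (\<lambda>K::real^'n^'m. A ** K ** B)"
  by (simp add: linear_conv_bounded_linear[symmetric] linearI matrix_add_ldistrib matrix_add_rdistrib
      matrix_scalar_ac scalar_matrix_assoc[symmetric])

lemma higher_differentiable_on_const: "higher_differentiable_on S (\<lambda>x. c) n"
  by (induction n arbitrary: c) simp_all

lemma higher_differentiable_on_bounded_linear:
  assumes "bounded_linear f"
  shows "higher_differentiable_on S f n"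
proof (cases n)
  case 0
  then show ?thesis using assms by (simp add: linear_continuous_on)
next
  case (Suc m)
  have "frechet_derivative f (at x) = f" for x
    using assms bounded_linear_imp_has_derivative frechet_derivative_at by metis
  then show ?thesis
    using Suc assms
    by (simp add: higher_differentiable_on_const bounded_linear_imp_differentiable)
qed

lemma smooth_on_bounded_linear: "bounded_linear f \<Longrightarrow> smooth_on S f"
  by (simp add: smooth_on_def higher_differentiable_on_bounded_linear)

lemma diffeomorphism_bounded_linear:
  assumes "bounded_linear f" "bounded_linear g"
    and "\<And>x. g (f x) = x" "\<And>y. f (g y) = y"
    and "f ` S \<subseteq> T" "g ` T \<subseteq> S"
  shows "diffeomorphism S T f"
  unfolding diffeomorphism_def
proof (intro exI conjI)
  have "f ` S = T"
  proof
    show "T \<subseteq> f ` S"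
    proof
      fix y assume "y \<in> T"
      then show "y \<in> f ` S"
        using assms(4,6) by (metis image_eqI image_subset_iff)
    qed
  qed (rule assms(5))
  moreover have "g ` T = S"
  proof
    show "S \<subseteq> g ` T"
    proof
      fix x assume "x \<in> S"
      then show "x \<in> g ` T"
        using assms(3,5) by (metis image_eqI image_subset_iff)
    qed
  qed (rule assms(6))
  ultimately show "homeomorphism S T f g"
    using assms by (simp add: homeomorphism_def linear_continuous_on)
  show "smooth_on S f" "smooth_on T g"
    using assms by (simp_all add: smooth_on_bounded_linear)
qed

lemma simtrans_eq_mult:
  fixes K :: "('x::finite,'u::finite,'y::finite) ctrl"
  shows "simtrans T K =
    blockm (mat 1 :: real^'u^'u) 0 0 T ** K ** blockm (mat 1 :: real^'y^'y) 0 0 (matrix_inv T)"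
  by (subst (2) blockm_blk[symmetric]) (simp add: simtrans_def blockm_mult matrix_mul_assoc)

lemma bounded_linear_simtrans: "bounded_linear (simtrans T)"
  unfolding simtrans_eq_mult[abs_def] by (rule bounded_linear_matrix_sandwich)

lemma simtrans_matrix_inv:
  fixes K :: "('x::finite,'u::finite,'y::finite) ctrl"
  assumes "invertible T"
  shows "simtrans (matrix_inv T) (simtrans T K) = K"
proof -
  have "simtrans (matrix_inv T) (simtrans T K) =
     (blockm (mat 1 :: real^'u^'u) 0 0 (matrix_inv T) ** blockm (mat 1) 0 0 T) ** K **
     (blockm (mat 1 :: real^'y^'y) 0 0 (matrix_inv T) ** blockm (mat 1) 0 0 T)"
    by (simp add: simtrans_eq_mult assms matrix_inv_matrix_inv matrix_mul_assoc)
  also have "\<dots> = K"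
    by (simp add: blockm_mult assms matrix_inv_left)
  finally show ?thesis .
qed

definition vec_join :: "'a^'m::finite \<Rightarrow> 'a^'n::finite \<Rightarrow> 'a^('m+'n)" where
  "vec_join x y = (\<chi> i. case i of Inl a \<Rightarrow> x $ a | Inr b \<Rightarrow> y $ b)"

lemma vec_join_eq_0_iff [simp]: "vec_join x y = 0 \<longleftrightarrow> x = 0 \<and> y = 0"
  by (auto simp: vec_join_def vec_eq_iff split: sum.split)

lemma blockm_mult_vec_join:
  fixes A :: "'a::semiring_1^'n1::finite^'m1::finite" and B :: "'a^'n2::finite^'m1"
    and C :: "'a^'n1^'m2::finite" and D :: "'a^'n2^'m2"
  shows "blockm A B C D *v vec_join x y = vec_join (A *v x + B *v y) (C *v x + D *v y)"
  unfolding blockm_def vec_join_def matrix_vector_mult_def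
  by (auto simp: vec_eq_iff sum.Plus[where A=UNIV and B=UNIV, simplified] o_def split: sum.split)

lemma invertible_mat_1_minus_mult:
  fixes X Y :: "real^'n::finite^'n"
  assumes "pos_def (blockm X (mat 1) (mat 1) Y)"
  shows "invertible (mat 1 - Y ** X)"
proof -
  have "v = 0" if "(mat 1 - Y ** X) *v v = 0" for v
  proof -
    have "v = Y *v (X *v v)"
      using that by (simp add: matrix_vector_mult_diff_rdistrib matrix_vector_mul_assoc)
    then have "blockm X (mat 1) (mat 1) Y *v vec_join v (- (X *v v)) = 0"
      by (simp add: blockm_mult_vec_join linear_neg[OF matrix_vector_mul_linear])
    then show "v = 0"
      using assms unfolding pos_def_def by (metis inner_zero_right less_irrefl vec_join_eq_0_iff)
  qed
  then show ?thesis
    using matrix_left_invertible_ker invertible_left_inverse by blast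
qed

lemma Ggamma_invertible:
  assumes "(X, Y, Ah, Bh, Ch, Dh, Pm, Xi) \<in> Ggamma P \<gamma>"
  shows "invertible Pm" "invertible Xi"
proof -
  have "det Xi * det Pm \<noteq> 0"
    using assms invertible_mat_1_minus_mult
    by (auto simp: Ggamma_def invertible_det_nz det_mul[symmetric])
  then show "invertible Pm" "invertible Xi"
    by (simp_all add: invertible_det_nz)
qed

lemma Phi_rescale:
  fixes P :: "('x::finite,'w::finite,'u::finite,'y::finite,'z::finite) plant"
  assumes S: "invertible S" and Xi: "invertible Xi" and Pm: "invertible Pm"
  shows "Phi P (X, Y, Ah, Bh, Ch, Dh, S ** Pm, Xi ** matrix_inv S) =
    simtrans S (Phi P (X, Y, Ah, Bh, Ch, Dh, Pm, Xi))"
proof -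
  let ?L = "blockm (mat 1 :: real^'u^'u) (0 :: real^'x^'u) (Y ** pB2 P) Xi"
  let ?R = "blockm (mat 1 :: real^'y^'y) (pC2 P ** X) (0 :: real^'y^'x) Pm"
  let ?N = "blockm Dh Ch Bh (Ah - Y ** pA P ** X)"
  let ?SL = "blockm (mat 1 :: real^'u^'u) 0 0 S"
  let ?SR = "blockm (mat 1 :: real^'y^'y) 0 0 S"
  have L: "blockm (mat 1) 0 (Y ** pB2 P) (Xi ** matrix_inv S) = ?L ** matrix_inv ?SL"
    by (simp add: S matrix_inv_blockm_diag blockm_mult)
  have R: "blockm (mat 1) (pC2 P ** X) 0 (S ** Pm) = ?SR ** ?R"
    by (simp add: blockm_mult)
  have inv: "invertible ?L" "invertible ?R" "invertible ?SL" "invertible ?SR"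
    "invertible (matrix_inv ?SL)"
    using S Xi Pm by (simp_all add: invertible_blockm_lower invertible_blockm_upper invertible_matrix_inv)
  have "Phi P (X, Y, Ah, Bh, Ch, Dh, S ** Pm, Xi ** matrix_inv S) =
      matrix_inv (?L ** matrix_inv ?SL) ** ?N ** matrix_inv (?SR ** ?R)"
    by (simp only: Phi_def prod.case L R)
  also have "\<dots> = ?SL ** (matrix_inv ?L ** ?N ** matrix_inv ?R) ** matrix_inv ?SR"
    by (simp add: inv matrix_inv_mult matrix_inv_matrix_inv matrix_mul_assoc)
  also have "\<dots> = simtrans S (Phi P (X, Y, Ah, Bh, Ch, Dh, Pm, Xi))"
    by (simp add: simtrans_eq_mult Phi_def S matrix_inv_blockm_diag)
  finally show ?thesis .
qed

lemma simtrans_Phi_lift: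
  assumes S: "invertible S" and g: "(X, Y, Ah, Bh, Ch, Dh, Pm, Xi) \<in> Ggamma P \<gamma>"
  shows "\<exists>Pm' Xi'. (X, Y, Ah, Bh, Ch, Dh, Pm', Xi') \<in> Ggamma P \<gamma> \<and> det Pm' = det S * det Pm \<and>
    Phi P (X, Y, Ah, Bh, Ch, Dh, Pm', Xi') = simtrans S (Phi P (X, Y, Ah, Bh, Ch, Dh, Pm, Xi))"
proof (intro exI conjI)
  have "Xi ** matrix_inv S ** (S ** Pm) = Xi ** (matrix_inv S ** S) ** Pm"
    by (simp add: matrix_mul_assoc)
  then show "(X, Y, Ah, Bh, Ch, Dh, S ** Pm, Xi ** matrix_inv S) \<in> Ggamma P \<gamma>"
    using g by (simp add: Ggamma_def S matrix_inv_left)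
  show "det (S ** Pm) = det S * det Pm"
    by (rule det_mul)
  show "Phi P (X, Y, Ah, Bh, Ch, Dh, S ** Pm, Xi ** matrix_inv S) =
      simtrans S (Phi P (X, Y, Ah, Bh, Ch, Dh, Pm, Xi))"
    using Phi_rescale[OF S] Ggamma_invertible[OF g] by blast
qed

lemma simtrans_Phi_Ggamma_plus:
  assumes "invertible S" "det S < 0"
  shows "simtrans S ` Phi P ` Ggamma_plus P \<gamma> \<subseteq> Phi P ` Ggamma_minus P \<gamma>"
proof clarify
  fix X Y Ah Bh Ch Dh Pm Xi
  assume "(X, Y, Ah, Bh, Ch, Dh, Pm, Xi) \<in> Ggamma_plus P \<gamma>"
  then obtain Pm' Xi' where "(X, Y, Ah, Bh, Ch, Dh, Pm', Xi') \<in> Ggamma_minus P \<gamma>"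
    and "Phi P (X, Y, Ah, Bh, Ch, Dh, Pm', Xi') = simtrans S (Phi P (X, Y, Ah, Bh, Ch, Dh, Pm, Xi))"
    using simtrans_Phi_lift[OF assms(1)] assms(2)
    by (fastforce simp: Ggamma_plus_def Ggamma_minus_def mult_neg_pos)
  then show "simtrans S (Phi P (X, Y, Ah, Bh, Ch, Dh, Pm, Xi)) \<in> Phi P ` Ggamma_minus P \<gamma>"
    by (metis image_eqI)
qed

lemma simtrans_Phi_Ggamma_minus:
  assumes "invertible S" "det S < 0"
  shows "simtrans S ` Phi P ` Ggamma_minus P \<gamma> \<subseteq> Phi P ` Ggamma_plus P \<gamma>"
proof clarify
  fix X Y Ah Bh Ch Dh Pm Xi
  assume "(X, Y, Ah, Bh, Ch, Dh, Pm, Xi) \<in> Ggamma_minus P \<gamma>"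
  then obtain Pm' Xi' where "(X, Y, Ah, Bh, Ch, Dh, Pm', Xi') \<in> Ggamma_plus P \<gamma>"
    and "Phi P (X, Y, Ah, Bh, Ch, Dh, Pm', Xi') = simtrans S (Phi P (X, Y, Ah, Bh, Ch, Dh, Pm, Xi))"
    using simtrans_Phi_lift[OF assms(1)] assms(2)
    by (fastforce simp: Ggamma_plus_def Ggamma_minus_def mult_neg_neg)
  then show "simtrans S (Phi P (X, Y, Ah, Bh, Ch, Dh, Pm, Xi)) \<in> Phi P ` Ggamma_plus P \<gamma>"
    by (metis image_eqI)
qed

theorem theorem2:
  fixes P :: "('x::finite,'w::finite,'u::finite,'y::finite,'z::finite) plant"
    and \<gamma> :: real
  assumes "stabilizable (pA P) (pB2 P)"
    and "detectable (pC2 P) (pA P)"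
    and "\<gamma> > gamma_opt P"
    and "{path_component_set (Kgamma P \<gamma>) K | K. K \<in> Kgamma P \<gamma>}
           = {Phi P ` Ggamma_plus P \<gamma>, Phi P ` Ggamma_minus P \<gamma>}"
    and "Phi P ` Ggamma_plus P \<gamma> \<noteq> Phi P ` Ggamma_minus P \<gamma>"
  shows "\<forall>T :: real^'x^'x. invertible T \<and> det T < 0 \<longrightarrow>
           diffeomorphism (Phi P ` Ggamma_plus P \<gamma>) (Phi P ` Ggamma_minus P \<gamma>) (simtrans T)"
proof (intro allI impI, elim conjE)
  fix T :: "real^'x^'x"
  assume T: "invertible T" and "det T < 0"
  then have T': "invertible (matrix_inv T)" "det (matrix_inv T) < 0"
    by (simp_all add: invertible_matrix_inv det_matrix_inv)
  show "diffeomorphism (Phi P ` Ggamma_plus P \<gamma>) (Phi P ` Ggamma_minus P \<gamma>) (simtrans T)"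
  proof (rule diffeomorphism_bounded_linear)
    show "simtrans T ` Phi P ` Ggamma_plus P \<gamma> \<subseteq> Phi P ` Ggamma_minus P \<gamma>"
      using T \<open>det T < 0\<close> by (rule simtrans_Phi_Ggamma_plus)
    show "simtrans (matrix_inv T) ` Phi P ` Ggamma_minus P \<gamma> \<subseteq> Phi P ` Ggamma_plus P \<gamma>"
      using T' by (rule simtrans_Phi_Ggamma_minus)
    show "simtrans (matrix_inv T) (simtrans T K) = K" for K :: "('x,'u,'y) ctrl"
      using T by (rule simtrans_matrix_inv)
    show "simtrans T (simtrans (matrix_inv T) K) = K" for K :: "('x,'u,'y) ctrl"
      using simtrans_matrix_inv[OF T'(1)] T by (simp add: matrix_inv_matrix_inv)
  qed (rule bounded_linear_simtrans)+
qed

end
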